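(* Let $E$ be a finite set and $\tau:2^E\to 2^E$ any map. Then $(E,\tau)$ is uniquely generated if and only if for every $X\subseteq E$, every basis $B$ of $X$, and every $Y\subseteq E$ with $\tau(Y)=\tau(X)$, we have $B\subseteq Y$.
   Context: For $X\subseteq E$, a generator of $X$ is any $B\subseteq E$ with $\tau(B)=\tau(X)$ (not required to be a subset of $X$); a basis of $X$ is an inclusion-minimal generator of $X$. The space $(E,\tau)$ is uniquely generated if every $X\subseteq E$ has exactly one basis. *)

theory Defs
  imports Main
begin

text \<open>A closure-type space (E, tau) with tau : 2^E -> 2^E. Only the values of tau
on subsets of E matter.\<close>

definition generator :: "'a set \<Rightarrow> ('a set \<Rightarrow> 'a set) \<Rightarrow> 'a set \<Rightarrow> 'a set \<Rightarrow> bool" where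
  "generator E \<tau> X B \<longleftrightarrow> B \<subseteq> E \<and> \<tau> B = \<tau> X"

definition basis :: "'a set \<Rightarrow> ('a set \<Rightarrow> 'a set) \<Rightarrow> 'a set \<Rightarrow> 'a set \<Rightarrow> bool" where
  "basis E \<tau> X B \<longleftrightarrow> generator E \<tau> X B \<and> (\<forall>C. C \<subset> B \<longrightarrow> \<not> generator E \<tau> X C)"

definition uniquely_generated :: "'a set \<Rightarrow> ('a set \<Rightarrow> 'a set) \<Rightarrow> bool" where
  "uniquely_generated E \<tau> \<longleftrightarrow> (\<forall>X. X \<subseteq> E \<longrightarrow> (\<exists>!B. basis E \<tau> X B))"

end

theory Submission
  imports Defs
begin

text \<open>Since E is finite, every generator contains a basis (shrink it while some proper subset
still generates). Hence a unique basis lies inside every generator; conversely, if every basis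
lies inside every generator, then any two bases of X, being generators of each other, coincide.\<close>

lemma finite_generator_contains_basis:
  assumes "finite Y" "generator E \<tau> X Y"
  shows "\<exists>B. B \<subseteq> Y \<and> basis E \<tau> X B"
  using assms
proof (induction Y rule: finite_psubset_induct)
  case (psubset Y)
  show ?case
  proof (cases "basis E \<tau> X Y")
    case True
    then show ?thesis by blast
  next
    case False
    then obtain C where C: "C \<subset> Y" "generator E \<tau> X C"
      using psubset.prems unfolding basis_def by blast
    from psubset.IH[OF C] C(1) show ?thesis by blast
  qed
qed

lemma unique_basis_subset_finite_generator:
  assumes "\<exists>!B. basis E \<tau> X B" "basis E \<tau> X B" "finite Y" "generator E \<tau> X Y"
  shows "B \<subseteq> Y"
proof -
  obtain B' where B': "B' \<subseteq> Y" "basis E \<tau> X B'"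
    using finite_generator_contains_basis[OF assms(3,4)] by blast
  have "B' = B"
    using assms(1,2) B'(2) by metis
  with B'(1) show ?thesis by simp
qed

lemma unique_basis_if_bases_subset_generators:
  assumes "finite X" "X \<subseteq> E"
    and below: "\<And>B Y. basis E \<tau> X B \<Longrightarrow> generator E \<tau> X Y \<Longrightarrow> B \<subseteq> Y"
  shows "\<exists>!B. basis E \<tau> X B"
proof -
  have "generator E \<tau> X X"
    using assms(2) unfolding generator_def by simp
  then obtain B where B: "basis E \<tau> X B"
    using finite_generator_contains_basis[OF assms(1)] by blast
  have "B' = B" if B': "basis E \<tau> X B'" for B'
  proof (rule subset_antisym)
    show "B' \<subseteq> B" using below[OF B'] B unfolding basis_def by simp
    show "B \<subseteq> B'" using below[OF B] B' unfolding basis_def by simp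
  qed
  with B show ?thesis by (intro ex1I)
qed

theorem mainTheorem6:
  fixes E :: "'a set" and \<tau> :: "'a set \<Rightarrow> 'a set"
  assumes "finite E"
    and "\<And>X. X \<subseteq> E \<Longrightarrow> \<tau> X \<subseteq> E"
  shows "uniquely_generated E \<tau> \<longleftrightarrow>
    (\<forall>X B Y. X \<subseteq> E \<longrightarrow> basis E \<tau> X B \<longrightarrow> Y \<subseteq> E \<longrightarrow> \<tau> Y = \<tau> X \<longrightarrow> B \<subseteq> Y)"
proof (intro iffI allI impI)
  fix X B Y
  assume "uniquely_generated E \<tau>" "X \<subseteq> E" "basis E \<tau> X B" "Y \<subseteq> E" "\<tau> Y = \<tau> X"
  moreover have "finite Y"
    using \<open>Y \<subseteq> E\<close> assms(1) by (rule finite_subset)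
  ultimately show "B \<subseteq> Y"
    by (intro unique_basis_subset_finite_generator[of E \<tau> X])
      (auto simp: uniquely_generated_def generator_def)
next
  assume below: "\<forall>X B Y. X \<subseteq> E \<longrightarrow> basis E \<tau> X B \<longrightarrow> Y \<subseteq> E \<longrightarrow> \<tau> Y = \<tau> X \<longrightarrow> B \<subseteq> Y"
  show "uniquely_generated E \<tau>"
    unfolding uniquely_generated_def
  proof (intro allI impI)
    fix X
    assume "X \<subseteq> E"
    moreover from this have "finite X"
      using assms(1) by (rule finite_subset)
    ultimately show "\<exists>!B. basis E \<tau> X B"
      using below by (intro unique_basis_if_bases_subset_generators) (auto simp: generator_def)
  qed
qed

end
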